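(* Assume $\tau_1\tau_2\|K\|^2\le1/2$ and $\tau_1\le1/(2L)$, that $x_0\in[0,1]^n$ and $y_0\in\mathbb R_+^{m_1}\times\mathbb R^{m_2}$, and that $\Phi$ is bounded below by $\Phi_*$ (i.e., $\Phi(x,y)\ge\Phi_*$ for all $x,y$). For $k\ge1$ define the residuals \[s_k^x=\frac{x_{k-1}-x_k}{\tau_1}+\nabla_x\hat{\mathcal L}(x_k,y_k)-\nabla_x\hat{\mathcal L}(x_{k-1},y_k),\qquad s_k^y=\frac{y_{k-1}-y_k}{\tau_2}-\nabla_y\hat{\mathcal L}(x_k,y_k)+\nabla_y\hat{\mathcal L}(\bar x_{k-1},y_k).\] Then for every $N\ge1$ there exists $k_0\le N$ such that \[s^x_{k_0}\in\nabla_x\hat{\mathcal L}(x_{k_0},y_{k_0})+\partial h_1(x_{k_0}),\qquad s^y_{k_0}\in-\nabla_y\hat{\mathcal L}(x_{k_0},y_{k_0})+\partial h_2(y_{k_0}),\] and \[\|s^x_{k_0}\|+\|s^y_{k_0}\|\le2\left[\left(2\|K\|+\frac3{2\tau_1}\right)^2\tau_1+\frac1{\tau_2}\right]^{1/2}\left[\frac{\Phi(x_0,y_0)-\Phi_*}{N}+\frac{2}{\tau_1N}\sum_{k=1}^N\|x_{k-1}\|^2+4\tau_2\|r\|^2\right]^{1/2}.\]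
   Context: Let $n,m_1,m_2$ be positive integers, $Q\in\mathbb R^{n\times n}$ symmetric, $c\in\mathbb R^n$, $A\in\mathbb R^{m_1\times n}$, $b\in\mathbb R^{m_1}$, $B\in\mathbb R^{m_2\times n}$, $d\in\mathbb R^{m_2}$. Let $K:=-\begin{pmatrix}A\\ B\end{pmatrix}$ and $r:=(b;d)$. Fix $\rho\ge0$ and let $\mathbf 1$ be the all-ones vector. Define $\hat{\mathcal L}(x,y):=\langle x,Qx\rangle+\langle c,x\rangle+\langle y,Kx+r\rangle+\rho\langle x,\mathbf 1-x\rangle$ (no convexity assumed), so $\nabla_x\hat{\mathcal L}(x,y)=c+\rho\mathbf 1+K^\top y+2Qx-2\rho x$ and $\nabla_y\hat{\mathcal L}(x,y)=Kx+r$. Let $Y:=\mathbb R_+^{m_1}\times\mathbb R^{m_2}$, $h_1$ the indicator of $[0,1]^n$, $h_2$ the indicator of $Y$ ($0$ on the set, $+\infty$ outside); $\partial h_1,\partial h_2$ denote their (convex) subdifferentials. $\Phi(x,y):=\hat{\mathcal L}(x,y)+h_1(x)-h_2(y)$. $L:=2(\|Q\|+\rho)$ with spectral norm. PDHG iterates with step sizes $\tau_1,\tau_2>0$: $x_{-1}:=x_0$, $\bar x_0:=x_0$, and for $k\ge1$: $y_k=\Pi_Y(y_{k-1}+\tau_2(K\bar x_{k-1}+r))$, $x_k=\Pi_{[0,1]^n}(x_{k-1}-\tau_1\nabla_x\hat{\mathcal L}(x_{k-1},y_k))$, $\bar x_k=2x_k-x_{k-1}$, with $\Pi$ the Euclidean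 projection. *)

theory Defs
  imports "HOL-Analysis.Analysis"
begin

definition Kop :: "real^'n^'m1 \<Rightarrow> real^'n^'m2 \<Rightarrow> real^'n \<Rightarrow> (real^'m1) \<times> (real^'m2)" where
  "Kop A B x = (- (A *v x), - (B *v x))"

definition KopT :: "real^'n^'m1 \<Rightarrow> real^'n^'m2 \<Rightarrow> (real^'m1) \<times> (real^'m2) \<Rightarrow> real^'n" where
  "KopT A B y = - (transpose A *v fst y + transpose B *v snd y)"

definition box01 :: "(real^'n) set" where
  "box01 = {x. \<forall>i. 0 \<le> x $ i \<and> x $ i \<le> 1}"

definition Yset :: "((real^'m1) \<times> (real^'m2)) set" where
  "Yset = {y. \<forall>i. 0 \<le> fst y $ i}"

definition ind :: "'a set \<Rightarrow> 'a \<Rightarrow> ereal" where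
  "ind C x = (if x \<in> C then 0 else \<infinity>)"

definition subdiff :: "('a::real_inner \<Rightarrow> ereal) \<Rightarrow> 'a \<Rightarrow> 'a set" where
  "subdiff h x = {g. h x < \<infinity> \<and> (\<forall>z. h x + ereal (inner g (z - x)) \<le> h z)}"

definition Lhat :: "real^'n^'n \<Rightarrow> real^'n \<Rightarrow> real^'n^'m1 \<Rightarrow> real^'m1 \<Rightarrow> real^'n^'m2 \<Rightarrow> real^'m2
    \<Rightarrow> real \<Rightarrow> real^'n \<Rightarrow> (real^'m1) \<times> (real^'m2) \<Rightarrow> real" where
  "Lhat Q c A b B d \<rho> x y = inner x (Q *v x) + inner c x + inner y (Kop A B x + (b, d))
      + \<rho> * inner x (1 - x)"

definition gradx :: "real^'n^'n \<Rightarrow> real^'n \<Rightarrow> real^'n^'m1 \<Rightarrow> real^'n^'m2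
    \<Rightarrow> real \<Rightarrow> real^'n \<Rightarrow> (real^'m1) \<times> (real^'m2) \<Rightarrow> real^'n" where
  "gradx Q c A B \<rho> x y = c + \<rho> *\<^sub>R 1 + KopT A B y + 2 *\<^sub>R (Q *v x) - (2 * \<rho>) *\<^sub>R x"

definition grady :: "real^'n^'m1 \<Rightarrow> real^'m1 \<Rightarrow> real^'n^'m2 \<Rightarrow> real^'m2
    \<Rightarrow> real^'n \<Rightarrow> (real^'m1) \<times> (real^'m2) \<Rightarrow> (real^'m1) \<times> (real^'m2)" where
  "grady A b B d x y = Kop A B x + (b, d)"

definition Phi :: "real^'n^'n \<Rightarrow> real^'n \<Rightarrow> real^'n^'m1 \<Rightarrow> real^'m1 \<Rightarrow> real^'n^'m2 \<Rightarrow> real^'m2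
    \<Rightarrow> real \<Rightarrow> real^'n \<Rightarrow> (real^'m1) \<times> (real^'m2) \<Rightarrow> ereal" where
  "Phi Q c A b B d \<rho> x y = ereal (Lhat Q c A b B d \<rho> x y) + ind box01 x - ind Yset y"

text \<open>PDHG state after k steps: (x_k, x_{k-1}, y_k), with x_{-1} = x_0.\<close>
fun pdhg :: "real^'n^'n \<Rightarrow> real^'n \<Rightarrow> real^'n^'m1 \<Rightarrow> real^'m1 \<Rightarrow> real^'n^'m2 \<Rightarrow> real^'m2
    \<Rightarrow> real \<Rightarrow> real \<Rightarrow> real \<Rightarrow> real^'n \<Rightarrow> (real^'m1) \<times> (real^'m2) \<Rightarrow> nat
    \<Rightarrow> (real^'n) \<times> (real^'n) \<times> ((real^'m1) \<times> (real^'m2))" where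
  "pdhg Q c A b B d \<rho> \<tau>1 \<tau>2 x0 y0 0 = (x0, x0, y0)"
| "pdhg Q c A b B d \<rho> \<tau>1 \<tau>2 x0 y0 (Suc k) =
     (let (x, xp, y) = pdhg Q c A b B d \<rho> \<tau>1 \<tau>2 x0 y0 k;
          xbar = 2 *\<^sub>R x - xp;
          y' = closest_point Yset (y + \<tau>2 *\<^sub>R (Kop A B xbar + (b, d)));
          x' = closest_point box01 (x - \<tau>1 *\<^sub>R gradx Q c A B \<rho> x y')
      in (x', x, y'))"

definition xit where "xit Q c A b B d \<rho> \<tau>1 \<tau>2 x0 y0 k = fst (pdhg Q c A b B d \<rho> \<tau>1 \<tau>2 x0 y0 k)"
definition yit where "yit Q c A b B d \<rho> \<tau>1 \<tau>2 x0 y0 k = snd (snd (pdhg Q c A b B d \<rho> \<tau>1 \<tau>2 x0 y0 k))"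
definition xbar where "xbar Q c A b B d \<rho> \<tau>1 \<tau>2 x0 y0 k =
   (let (x, xp, y) = pdhg Q c A b B d \<rho> \<tau>1 \<tau>2 x0 y0 k in 2 *\<^sub>R x - xp)"

text \<open>Residuals s^x_k, s^y_k (meaningful for k >= 1).\<close>
definition resx where "resx Q c A b B d \<rho> \<tau>1 \<tau>2 x0 y0 k =
   (let x = xit Q c A b B d \<rho> \<tau>1 \<tau>2 x0 y0; y = yit Q c A b B d \<rho> \<tau>1 \<tau>2 x0 y0 in
    (1 / \<tau>1) *\<^sub>R (x (k - 1) - x k) + gradx Q c A B \<rho> (x k) (y k)
      - gradx Q c A B \<rho> (x (k - 1)) (y k))"

definition resy where "resy Q c A b B d \<rho> \<tau>1 \<tau>2 x0 y0 k =
   (let x = xit Q c A b B d \<rho> \<tau>1 \<tau>2 x0 y0; y = yit Q c A b B d \<rho> \<tau>1 \<tau>2 x0 y0;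
        xb = xbar Q c A b B d \<rho> \<tau>1 \<tau>2 x0 y0 in
    (1 / \<tau>2) *\<^sub>R (y (k - 1) - y k) - grady A b B d (x k) (y k)
      + grady A b B d (xb (k - 1)) (y k))"

end

theory Submission
  imports Defs
begin

(*
  Since 4 (||Q|| + rho) tau1 <= 1, the projected gradient step in x decreases Lhat(., y_k) by at
  least (3/4) |x_k - x_(k-1)|^2 / tau1, while the dual step changes Lhat by
  <y_k - y_(k-1), K x_(k-1) + r>.  Young's inequality together with the nonexpansiveness of the
  projection onto Y (and tau1 tau2 ||K||^2 <= 1/2) controls this inner product, so that
    V_k = 4 Lhat(x_k, y_k) + 2 |x_k - x_(k-1)|^2 / tau1
  is a Lyapunov function up to the error 8 tau2 |K x_(k-1) + r|^2.  Telescoping and Phi >= Phi_*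
  bound sum_k (|x_k - x_(k-1)|^2 / tau1 + |y_k - y_(k-1)|^2 / tau2).  The residuals lie in the
  required subdifferentials by the variational inequality of the projections, and their norms are
  bounded by the step lengths; a weighted Cauchy-Schwarz inequality turns this into a bound on the
  sum of squared residual norms, and an index where the squared residual is at most its average
  yields the estimate.
*)

lemma sum_lessThan_le_sum_Suc:
  fixes f :: "nat \<Rightarrow> real"
  assumes "f 0 = 0" and "\<And>k. 0 \<le> f k"
  shows "(\<Sum>k<n. f k) \<le> (\<Sum>k<n. f (Suc k))"
proof -
  have "(\<Sum>k<n. f k) + f n = f 0 + (\<Sum>k<n. f (Suc k))"
    using sum.lessThan_Suc_shift[of f n] by simp
  then show ?thesis
    using assms(1) assms(2)[of n] by linarith
qed

lemma exists_le_average: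
  fixes f :: "nat \<Rightarrow> real"
  assumes "0 < n" and "(\<Sum>k<n. f k) \<le> real n * M"
  obtains k where "k < n" and "f k \<le> M"
proof (rule ccontr)
  assume "\<not> thesis"
  with that have "\<And>k. k < n \<Longrightarrow> M < f k" by force
  then have "(\<Sum>k<n. M) < (\<Sum>k<n. f k)"
    using \<open>0 < n\<close> by (intro sum_strict_mono) auto
  with assms(2) show False by simp
qed

lemma square_add_le_weighted:
  fixes p q c1 c2 :: real
  assumes "0 < c1" and "0 < c2"
  shows "(p + q)\<^sup>2 \<le> (c1 + c2) * (p\<^sup>2 / c1 + q\<^sup>2 / c2)"
proof -
  have "(c1 + c2) * (p\<^sup>2 / c1 + q\<^sup>2 / c2) - (p + q)\<^sup>2 = (c2 * p - c1 * q)\<^sup>2 / (c1 * c2)"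
    using assms by (simp add: field_simps power2_eq_square)
  moreover have "0 \<le> (c2 * p - c1 * q)\<^sup>2 / (c1 * c2)"
    using assms by simp
  ultimately show ?thesis by linarith
qed

lemma square_le_double_sum_squares:
  fixes p q1 q2 :: real
  assumes "0 \<le> p" and "p \<le> q1 + q2"
  shows "p\<^sup>2 \<le> 2 * q1\<^sup>2 + 2 * q2\<^sup>2"
proof -
  have "p\<^sup>2 \<le> (q1 + q2)\<^sup>2"
    using assms by (intro power_mono) auto
  also have "\<dots> \<le> 2 * q1\<^sup>2 + 2 * q2\<^sup>2"
    using square_add_le_weighted[of 1 1 q1 q2] by simp
  finally show ?thesis .
qed

lemma square_weighted_sum_le:
  fixes \<alpha> \<beta> u v :: real
  assumes "0 \<le> \<alpha>" and "0 \<le> \<beta>"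
  shows "(\<alpha> * u + \<beta> * v)\<^sup>2 \<le> (\<alpha> + \<beta>) * (\<alpha> * u\<^sup>2 + \<beta> * v\<^sup>2)"
proof -
  have "(\<alpha> + \<beta>) * (\<alpha> * u\<^sup>2 + \<beta> * v\<^sup>2) - (\<alpha> * u + \<beta> * v)\<^sup>2 = \<alpha> * \<beta> * (u - v)\<^sup>2"
    by (simp add: power2_eq_square algebra_simps)
  moreover have "0 \<le> \<alpha> * \<beta> * (u - v)\<^sup>2"
    using assms by simp
  ultimately show ?thesis by linarith
qed

lemma weighted_Cauchy_Schwarz_le:
  fixes s \<alpha> \<beta> u v w t1 t2 :: real
  assumes "0 < t1" and "0 < t2" and "0 < \<alpha>" and "0 \<le> \<beta>"
    and "0 \<le> s" and "s \<le> \<alpha> * u + \<beta> * v + w / t2"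
  shows "s\<^sup>2 \<le> ((\<alpha> + \<beta>)\<^sup>2 * t1 + 1 / t2)
                * ((\<alpha> * u\<^sup>2 + \<beta> * v\<^sup>2) / ((\<alpha> + \<beta>) * t1) + w\<^sup>2 / t2)"
proof -
  have "0 < \<alpha> + \<beta>"
    using assms by simp
  have first_le: "(\<alpha> * u + \<beta> * v)\<^sup>2 / ((\<alpha> + \<beta>)\<^sup>2 * t1)
      \<le> (\<alpha> * u\<^sup>2 + \<beta> * v\<^sup>2) / ((\<alpha> + \<beta>) * t1)"
  proof -
    have "(\<alpha> * u + \<beta> * v)\<^sup>2 / ((\<alpha> + \<beta>)\<^sup>2 * t1)
        \<le> (\<alpha> + \<beta>) * (\<alpha> * u\<^sup>2 + \<beta> * v\<^sup>2) / ((\<alpha> + \<beta>)\<^sup>2 * t1)"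
      using square_weighted_sum_le[of \<alpha> \<beta> u v] assms by (intro divide_right_mono) auto
    also have "\<dots> = (\<alpha> * u\<^sup>2 + \<beta> * v\<^sup>2) / ((\<alpha> + \<beta>) * t1)"
      using \<open>0 < \<alpha> + \<beta>\<close> by (simp add: power2_eq_square mult.assoc)
    finally show ?thesis .
  qed
  have "s\<^sup>2 \<le> (\<alpha> * u + \<beta> * v + w / t2)\<^sup>2"
    using assms(5,6) by (intro power_mono) auto
  also have "\<dots> \<le> ((\<alpha> + \<beta>)\<^sup>2 * t1 + 1 / t2)
      * ((\<alpha> * u + \<beta> * v)\<^sup>2 / ((\<alpha> + \<beta>)\<^sup>2 * t1) + (w / t2)\<^sup>2 / (1 / t2))"
    using assms \<open>0 < \<alpha> + \<beta>\<close> by (intro square_add_le_weighted) auto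
  also have "\<dots> \<le> ((\<alpha> + \<beta>)\<^sup>2 * t1 + 1 / t2)
      * ((\<alpha> * u\<^sup>2 + \<beta> * v\<^sup>2) / ((\<alpha> + \<beta>) * t1) + w\<^sup>2 / t2)"
    using first_le assms(1,2) by (intro mult_left_mono) (auto simp: power2_eq_square)
  finally show ?thesis .
qed

lemma two_mult_le_young:
  fixes a b t :: real
  assumes "0 < t"
  shows "2 * a * b \<le> a\<^sup>2 / t + t * b\<^sup>2"
proof -
  have "a\<^sup>2 / t + t * b\<^sup>2 - 2 * a * b = (a - t * b)\<^sup>2 / t"
    using assms by (simp add: field_simps power2_eq_square)
  moreover have "0 \<le> (a - t * b)\<^sup>2 / t"
    using assms by simp
  ultimately show ?thesis by linarith
qed

lemma closest_point_residual_in_subdiff_ind: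
  fixes S :: "'a::{real_inner,heine_borel} set"
  assumes "convex S" and "closed S" and "S \<noteq> {}" and "0 < t"
  shows "(1 / t) *\<^sub>R (w - closest_point S w) \<in> subdiff (ind S) (closest_point S w)"
proof -
  have "closest_point S w \<in> S"
    using assms(2,3) by (rule closest_point_in_set)
  moreover have "inner ((1 / t) *\<^sub>R (w - closest_point S w)) (z - closest_point S w) \<le> 0"
    if "z \<in> S" for z
    using closest_point_dot[OF assms(1,2) that] assms(4) by (simp add: divide_nonpos_pos)
  ultimately show ?thesis
    unfolding subdiff_def ind_def by auto
qed

lemma closest_point_gradient_step:
  fixes S :: "'a::{real_inner,heine_borel} set" and x g :: 'a
  assumes "convex S" and "closed S" and "x \<in> S" and "0 < t"
  defines "x' \<equiv> closest_point S (x - t *\<^sub>R g)"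
  shows "inner g (x' - x) \<le> - (norm (x' - x))\<^sup>2 / t"
proof -
  have "inner ((x - t *\<^sub>R g) - x') (x - x') \<le> 0"
    unfolding x'_def using assms(1-3) by (rule closest_point_dot)
  then have "(norm (x' - x))\<^sup>2 + t * inner g (x' - x) \<le> 0"
    by (simp add: power2_norm_eq_inner inner_diff_left inner_diff_right inner_commute algebra_simps)
  then show ?thesis
    using assms(4) by (simp add: field_simps)
qed

lemma box01_eq_cbox: "box01 = cbox 0 (1 :: real^'n)"
  by (auto simp: box01_def mem_box_cart)

lemma closed_box01: "closed box01" and convex_box01: "convex box01"
  unfolding box01_eq_cbox by (rule closed_cbox, rule convex_box)

lemma box01_nonempty: "box01 \<noteq> {}"
proof -
  have "0 \<in> box01" by (simp add: box01_def)
  then show ?thesis by blast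
qed

lemma Yset_eq_Times: "Yset = {x :: real^'m1. \<forall>i. 0 \<le> x $ i} \<times> (UNIV :: (real^'m2) set)"
  by (auto simp: Yset_def)

lemma closed_Yset: "closed Yset"
  unfolding Yset_eq_Times by (intro closed_Times closed_positive_orthant closed_UNIV)

lemma convex_Yset: "convex Yset"
  unfolding Yset_eq_Times by (intro convex_Times convex_box_cart convex_UNIV) (simp add: atLeast_def[symmetric])

lemma Yset_nonempty: "Yset \<noteq> {}"
proof -
  have "0 \<in> Yset" by (simp add: Yset_def)
  then show ?thesis by blast
qed

lemma bounded_linear_Kop: "bounded_linear (Kop A B)"
proof -
  have "Kop A B = (\<lambda>x. (- (A *v x), - (B *v x)))"
    by (simp add: Kop_def fun_eq_iff)
  then show ?thesis
    by (simp add: bounded_linear_Pair bounded_linear_minus)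
qed

lemma inner_Kop_eq_inner_KopT: "inner y (Kop A B v) = inner (KopT A B y) v"
  by (cases y) (simp add: Kop_def KopT_def inner_diff_left dot_lmul_matrix)

lemma Lhat_diff_x:
  assumes "transpose Q = Q"
  shows "Lhat Q c A b B d \<rho> x' y - Lhat Q c A b B d \<rho> x y
     = inner (gradx Q c A B \<rho> x y) (x' - x) + inner (x' - x) (Q *v (x' - x))
       - \<rho> * inner (x' - x) (x' - x)"
proof -
  interpret K: bounded_linear "Kop A B" by (rule bounded_linear_Kop)
  define e where "e = x' - x"
  have "inner x (Q *v e) = inner (transpose Q *v x) e"
    by (simp add: dot_lmul_matrix)
  then have Q_inner_symm: "inner x (Q *v e) = inner e (Q *v x)"
    using assms by (simp add: inner_commute)
  have "x' = x + e" unfolding e_def by simp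
  then show ?thesis
    unfolding Lhat_def gradx_def e_def[symmetric]
    by (simp add: K.add inner_add_left inner_add_right inner_diff_left inner_diff_right
        matrix_vector_right_distrib inner_Kop_eq_inner_KopT Q_inner_symm algebra_simps
        inner_commute[of c] inner_commute[of e 1] inner_commute[of x e] inner_commute[of e "Q *v x"])
qed

lemma Lhat_diff_y:
  "Lhat Q c A b B d \<rho> x y' - Lhat Q c A b B d \<rho> x y = inner (y' - y) (Kop A B x + (b, d))"
  by (simp add: Lhat_def inner_diff_left)

lemma gradx_diff:
  "gradx Q c A B \<rho> x' y - gradx Q c A B \<rho> x y = 2 *\<^sub>R (Q *v (x' - x)) - (2 * \<rho>) *\<^sub>R (x' - x)"
  by (simp add: gradx_def matrix_vector_mult_diff_distrib algebra_simps)

lemma grady_diff: "grady A b B d x' y - grady A b B d x y = Kop A B (x' - x)"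
proof -
  interpret K: bounded_linear "Kop A B"
    by (rule bounded_linear_Kop)
  show ?thesis
    by (simp add: grady_def K.diff)
qed

locale pdhg_iteration =
  fixes Q :: "real^'n^'n" and c :: "real^'n" and A :: "real^'n^'m1" and b :: "real^'m1"
    and B :: "real^'n^'m2" and d :: "real^'m2" and \<rho> \<tau>1 \<tau>2 :: real
    and x0 :: "real^'n" and y0 :: "(real^'m1) \<times> (real^'m2)"
  assumes Q_symm: "transpose Q = Q"
    and \<rho>_nonneg: "0 \<le> \<rho>"
    and \<tau>1_pos: "0 < \<tau>1" and \<tau>2_pos: "0 < \<tau>2"
    and primal_dual_step: "\<tau>1 * \<tau>2 * (onorm (Kop A B))\<^sup>2 \<le> 1 / 2"
    and primal_step: "4 * (onorm (\<lambda>v. Q *v v) + \<rho>) * \<tau>1 \<le> 1"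
    and x0_in: "x0 \<in> box01" and y0_in: "y0 \<in> Yset"
begin

abbreviation "X \<equiv> xit Q c A b B d \<rho> \<tau>1 \<tau>2 x0 y0"
abbreviation "Y \<equiv> yit Q c A b B d \<rho> \<tau>1 \<tau>2 x0 y0"
abbreviation "Xbar \<equiv> xbar Q c A b B d \<rho> \<tau>1 \<tau>2 x0 y0"
abbreviation "sx \<equiv> resx Q c A b B d \<rho> \<tau>1 \<tau>2 x0 y0"
abbreviation "sy \<equiv> resy Q c A b B d \<rho> \<tau>1 \<tau>2 x0 y0"
abbreviation "K \<equiv> Kop A B"
abbreviation "r \<equiv> (b, d)"
abbreviation "\<L> \<equiv> Lhat Q c A b B d \<rho>"
abbreviation "grad_x \<equiv> gradx Q c A B \<rho>"
abbreviation "grad_y \<equiv> grady A b B d"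
abbreviation "normK \<equiv> onorm (Kop A B)"
abbreviation "normQ \<equiv> onorm (\<lambda>v. Q *v v)"

sublocale K: bounded_linear K
  by (rule bounded_linear_Kop)

lemma Y_Suc: "Y (Suc k) = closest_point Yset (Y k + \<tau>2 *\<^sub>R (K (Xbar k) + r))"
  and X_Suc: "X (Suc k) = closest_point box01 (X k - \<tau>1 *\<^sub>R grad_x (X k) (Y (Suc k)))"
  and Xbar_Suc: "Xbar (Suc k) = 2 *\<^sub>R X (Suc k) - X k"
  by (cases "pdhg Q c A b B d \<rho> \<tau>1 \<tau>2 x0 y0 k"; simp add: xit_def yit_def xbar_def Let_def)+

lemma X_0: "X 0 = x0" and Y_0: "Y 0 = y0"
  by (simp_all add: xit_def yit_def)

lemma Xbar_eq: "Xbar k = 2 *\<^sub>R X k - X (k - 1)"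
proof (cases k)
  case 0
  then show ?thesis by (simp add: xbar_def xit_def scaleR_2)
next
  case (Suc j)
  then show ?thesis by (simp add: Xbar_Suc)
qed

lemma X_in: "X k \<in> box01"
  by (cases k) (simp_all add: X_0 x0_in X_Suc closest_point_in_set closed_box01 box01_nonempty)

lemma Y_in: "Y k \<in> Yset"
  by (cases k) (simp_all add: Y_0 y0_in Y_Suc closest_point_in_set closed_Yset Yset_nonempty)

lemma Phi_eq_Lhat: "Phi Q c A b B d \<rho> (X k) (Y k) = ereal (\<L> (X k) (Y k))"
  using X_in Y_in by (simp add: Phi_def ind_def)

lemma normQ_\<rho>_le: "normQ + \<rho> \<le> 1 / (4 * \<tau>1)"
  using primal_step \<tau>1_pos by (simp add: field_simps)

lemma normQ_le: "normQ \<le> 1 / (4 * \<tau>1)"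
  using normQ_\<rho>_le \<rho>_nonneg by linarith

lemma normK_sq_le: "\<tau>2 * normK\<^sup>2 \<le> 1 / (2 * \<tau>1)"
  using primal_dual_step \<tau>1_pos by (simp add: field_simps)

lemma norm_Q_le: "norm (Q *v v) \<le> normQ * norm v"
  by (rule onorm) simp

lemma norm_K_le: "norm (K v) \<le> normK * norm v"
  using onorm[OF bounded_linear_Kop] by blast

lemma normK_nonneg: "0 \<le> normK"
  by (rule onorm_pos_le[OF bounded_linear_Kop])

(* Truncated subtraction gives dx 0 = 0, in line with the convention x_(-1) = x_0. *)
definition dx :: "nat \<Rightarrow> real" where "dx k = norm (X k - X (k - 1))"
definition dy :: "nat \<Rightarrow> real" where "dy k = norm (Y k - Y (k - 1))"

lemma dx_Suc: "dx (Suc j) = norm (X (Suc j) - X j)"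
  and dy_Suc: "dy (Suc j) = norm (Y (Suc j) - Y j)"
  by (simp_all add: dx_def dy_def)

lemma primal_descent:
  "\<L> (X (Suc j)) (Y (Suc j)) \<le> \<L> (X j) (Y (Suc j)) - 3 / 4 * (dx (Suc j))\<^sup>2 / \<tau>1"
proof -
  define e where "e = X (Suc j) - X j"
  define g where "g = grad_x (X j) (Y (Suc j))"
  have dx_eq: "dx (Suc j) = norm e"
    by (simp add: dx_def e_def)
  have "inner g e \<le> - (norm e)\<^sup>2 / \<tau>1"
    unfolding e_def X_Suc g_def
    by (rule closest_point_gradient_step[OF convex_box01 closed_box01 X_in \<tau>1_pos])
  moreover have "inner e (Q *v e) \<le> (norm e)\<^sup>2 / (4 * \<tau>1)"
  proof -
    have "inner e (Q *v e) \<le> norm e * (normQ * norm e)"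
      using norm_cauchy_schwarz[of e "Q *v e"] norm_Q_le[of e]
      by (meson mult_left_mono norm_ge_zero order_trans)
    also have "\<dots> \<le> norm e * (1 / (4 * \<tau>1) * norm e)"
      using normQ_le by (intro mult_left_mono mult_right_mono) auto
    finally show ?thesis by (simp add: power2_eq_square)
  qed
  moreover have "0 \<le> \<rho> * inner e e"
    using \<rho>_nonneg by simp
  moreover have "(norm e)\<^sup>2 / (4 * \<tau>1) - (norm e)\<^sup>2 / \<tau>1 = - 3 / 4 * (norm e)\<^sup>2 / \<tau>1"
    by (simp add: field_simps)
  ultimately show ?thesis
    unfolding dx_eq using Lhat_diff_x[OF Q_symm, of c A b B d \<rho> "X (Suc j)" "Y (Suc j)" "X j"]
    unfolding g_def[symmetric] e_def[symmetric] by linarith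
qed

lemma dual_step_le:
  "(dy (Suc j))\<^sup>2 / \<tau>2 \<le> 2 * \<tau>2 * (norm (K (X j) + r))\<^sup>2 + (dx j)\<^sup>2 / \<tau>1"
proof -
  define g where "g = K (X j) + r"
  have Xbar_step: "K (Xbar j) + r = g + K (X j - X (j - 1))"
    unfolding g_def Xbar_eq K.diff K.scaleR by (simp add: algebra_simps scaleR_2)
  have "dy (Suc j) = dist (closest_point Yset (Y j + \<tau>2 *\<^sub>R (K (Xbar j) + r))) (closest_point Yset (Y j))"
    by (simp add: dy_def Y_Suc closest_point_self[OF Y_in] dist_norm)
  also have "\<dots> \<le> dist (Y j + \<tau>2 *\<^sub>R (K (Xbar j) + r)) (Y j)"
    by (rule closest_point_lipschitz[OF convex_Yset closed_Yset Yset_nonempty])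
  also have "\<dots> = \<tau>2 * norm (K (Xbar j) + r)"
    using \<tau>2_pos by (simp add: dist_norm)
  finally have dy_le: "dy (Suc j) \<le> \<tau>2 * norm (K (Xbar j) + r)" .
  have "norm (K (Xbar j) + r) \<le> norm g + normK * dx j"
    unfolding Xbar_step dx_def
    using norm_triangle_ineq[of g "K (X j - X (j - 1))"] norm_K_le[of "X j - X (j - 1)"] by linarith
  then have norm_sq_le: "(norm (K (Xbar j) + r))\<^sup>2 \<le> 2 * (norm g)\<^sup>2 + 2 * (normK * dx j)\<^sup>2"
    by (rule square_le_double_sum_squares[OF norm_ge_zero])
  have "(dy (Suc j))\<^sup>2 \<le> (\<tau>2 * norm (K (Xbar j) + r))\<^sup>2"
    by (rule power_mono[OF dy_le]) (simp add: dy_def)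
  then have "(dy (Suc j))\<^sup>2 / \<tau>2 \<le> \<tau>2 * (norm (K (Xbar j) + r))\<^sup>2"
    by (simp add: pos_divide_le_eq[OF \<tau>2_pos] power_mult_distrib power2_eq_square mult_ac)
  also have "\<dots> \<le> \<tau>2 * (2 * (norm g)\<^sup>2 + 2 * (normK * dx j)\<^sup>2)"
    using norm_sq_le \<tau>2_pos by simp
  also have "\<dots> = 2 * \<tau>2 * (norm g)\<^sup>2 + (\<tau>2 * normK\<^sup>2) * (2 * (dx j)\<^sup>2)"
    by (simp add: algebra_simps power_mult_distrib)
  also have "\<dots> \<le> 2 * \<tau>2 * (norm g)\<^sup>2 + 1 / (2 * \<tau>1) * (2 * (dx j)\<^sup>2)"
    using normK_sq_le by (intro add_left_mono mult_right_mono) auto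
  finally show ?thesis
    unfolding g_def by simp
qed

lemma dual_change_le:
  "4 * inner (Y (Suc j) - Y j) (K (X j) + r) \<le> 4 * \<tau>2 * (norm (K (X j) + r))\<^sup>2 + (dy (Suc j))\<^sup>2 / \<tau>2"
proof -
  have "inner (Y (Suc j) - Y j) (K (X j) + r) \<le> dy (Suc j) * norm (K (X j) + r)"
    unfolding dy_def using norm_cauchy_schwarz by simp
  moreover have "2 * dy (Suc j) * (2 * norm (K (X j) + r))
      \<le> (dy (Suc j))\<^sup>2 / \<tau>2 + \<tau>2 * (2 * norm (K (X j) + r))\<^sup>2"
    by (rule two_mult_le_young[OF \<tau>2_pos])
  ultimately show ?thesis
    by (simp add: power_mult_distrib)
qed

lemma norm_K_plus_r_sq_le:
  "8 * \<tau>2 * (norm (K v + r))\<^sup>2 \<le> 8 / \<tau>1 * (norm v)\<^sup>2 + 16 * \<tau>2 * (norm r)\<^sup>2"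
proof -
  have "norm (K v + r) \<le> normK * norm v + norm r"
    using norm_triangle_ineq[of "K v" r] norm_K_le[of v] by linarith
  then have "(norm (K v + r))\<^sup>2 \<le> 2 * (normK * norm v)\<^sup>2 + 2 * (norm r)\<^sup>2"
    by (rule square_le_double_sum_squares[OF norm_ge_zero])
  then have "8 * \<tau>2 * (norm (K v + r))\<^sup>2 \<le> 8 * \<tau>2 * (2 * (normK * norm v)\<^sup>2 + 2 * (norm r)\<^sup>2)"
    using \<tau>2_pos by simp
  also have "\<dots> = 8 * (\<tau>2 * normK\<^sup>2) * (2 * (norm v)\<^sup>2) + 16 * \<tau>2 * (norm r)\<^sup>2"
    by (simp add: algebra_simps power_mult_distrib)
  also have "\<dots> \<le> 8 * (1 / (2 * \<tau>1)) * (2 * (norm v)\<^sup>2) + 16 * \<tau>2 * (norm r)\<^sup>2"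
    using normK_sq_le by (intro add_right_mono mult_right_mono mult_left_mono) auto
  finally show ?thesis
    by simp
qed

definition lyapunov :: "nat \<Rightarrow> real" where
  "lyapunov k = 4 * \<L> (X k) (Y k) + 2 * (dx k)\<^sup>2 / \<tau>1"

lemma lyapunov_decrease:
  "(dx (Suc j))\<^sup>2 / \<tau>1 + (dy (Suc j))\<^sup>2 / \<tau>2
     \<le> lyapunov j - lyapunov (Suc j) + 8 * \<tau>2 * (norm (K (X j) + r))\<^sup>2"
  using primal_descent[of j] Lhat_diff_y[of Q c A b B d \<rho> "X j" "Y (Suc j)" "Y j"]
    dual_change_le[of j] dual_step_le[of j]
  unfolding lyapunov_def by linarith

lemma sum_step_lengths_le:
  assumes Phi_lower: "\<forall>u \<in> box01. \<forall>v \<in> Yset. ereal \<Phi>star \<le> Phi Q c A b B d \<rho> u v"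
  shows "(\<Sum>j<N. (dx (Suc j))\<^sup>2 / \<tau>1 + (dy (Suc j))\<^sup>2 / \<tau>2)
    \<le> 4 * (real_of_ereal (Phi Q c A b B d \<rho> x0 y0) - \<Phi>star)
       + 8 / \<tau>1 * (\<Sum>j<N. (norm (X j))\<^sup>2) + 16 * real N * \<tau>2 * (norm r)\<^sup>2"
proof -
  have lyapunov_0: "lyapunov 0 = 4 * real_of_ereal (Phi Q c A b B d \<rho> x0 y0)"
    using Phi_eq_Lhat[of 0] by (simp add: lyapunov_def dx_def X_0 Y_0)
  have "ereal \<Phi>star \<le> ereal (\<L> (X N) (Y N))"
    using Phi_lower X_in Y_in Phi_eq_Lhat by metis
  moreover have "0 \<le> 2 * (dx N)\<^sup>2 / \<tau>1"
    using \<tau>1_pos by simp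
  ultimately have lyapunov_N: "4 * \<Phi>star \<le> lyapunov N"
    unfolding lyapunov_def by simp
  have "(\<Sum>j<N. (dx (Suc j))\<^sup>2 / \<tau>1 + (dy (Suc j))\<^sup>2 / \<tau>2)
      \<le> (\<Sum>j<N. lyapunov j - lyapunov (Suc j) + 8 * \<tau>2 * (norm (K (X j) + r))\<^sup>2)"
    by (rule sum_mono) (rule lyapunov_decrease)
  also have "\<dots> = lyapunov 0 - lyapunov N + (\<Sum>j<N. 8 * \<tau>2 * (norm (K (X j) + r))\<^sup>2)"
    by (simp add: sum.distrib sum_lessThan_telescope')
  also have "\<dots> \<le> lyapunov 0 - lyapunov N
      + (\<Sum>j<N. 8 / \<tau>1 * (norm (X j))\<^sup>2 + 16 * \<tau>2 * (norm r)\<^sup>2)"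
    by (intro add_left_mono sum_mono norm_K_plus_r_sq_le)
  finally show ?thesis
    using lyapunov_0 lyapunov_N by (simp add: sum.distrib sum_distrib_left)
qed

lemma resx_Suc:
  "sx (Suc j) = (1 / \<tau>1) *\<^sub>R (X j - X (Suc j)) + grad_x (X (Suc j)) (Y (Suc j)) - grad_x (X j) (Y (Suc j))"
  by (simp add: resx_def Let_def)

lemma resy_Suc:
  "sy (Suc j) = (1 / \<tau>2) *\<^sub>R (Y j - Y (Suc j)) - grad_y (X (Suc j)) (Y (Suc j)) + grad_y (Xbar j) (Y (Suc j))"
  by (simp add: resy_def Let_def)

lemma resx_in_subdiff:
  "sx (Suc j) \<in> (\<lambda>g. grad_x (X (Suc j)) (Y (Suc j)) + g) ` subdiff (ind box01) (X (Suc j))"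
proof -
  define w where "w = X j - \<tau>1 *\<^sub>R grad_x (X j) (Y (Suc j))"
  have "(1 / \<tau>1) *\<^sub>R (w - X (Suc j)) \<in> subdiff (ind box01) (X (Suc j))"
    unfolding X_Suc w_def
    by (rule closest_point_residual_in_subdiff_ind[OF convex_box01 closed_box01 box01_nonempty \<tau>1_pos])
  moreover have "sx (Suc j) = grad_x (X (Suc j)) (Y (Suc j)) + (1 / \<tau>1) *\<^sub>R (w - X (Suc j))"
    unfolding resx_Suc w_def using \<tau>1_pos by (simp add: algebra_simps)
  ultimately show ?thesis
    by blast
qed

lemma resy_in_subdiff:
  "sy (Suc j) \<in> (\<lambda>g. - grad_y (X (Suc j)) (Y (Suc j)) + g) ` subdiff (ind Yset) (Y (Suc j))"
proof -
  define w where "w = Y j + \<tau>2 *\<^sub>R (K (Xbar j) + r)"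
  have "(1 / \<tau>2) *\<^sub>R (w - Y (Suc j)) \<in> subdiff (ind Yset) (Y (Suc j))"
    unfolding Y_Suc w_def
    by (rule closest_point_residual_in_subdiff_ind[OF convex_Yset closed_Yset Yset_nonempty \<tau>2_pos])
  moreover have "sy (Suc j) = - grad_y (X (Suc j)) (Y (Suc j)) + (1 / \<tau>2) *\<^sub>R (w - Y (Suc j))"
    unfolding resy_Suc w_def grady_def using \<tau>2_pos by (simp add: algebra_simps zero_prod_def)
  ultimately show ?thesis
    by blast
qed

lemma norm_resx_le: "norm (sx (Suc j)) \<le> 3 / (2 * \<tau>1) * dx (Suc j)"
proof -
  define e where "e = X (Suc j) - X j"
  have sx_eq: "sx (Suc j) = 2 *\<^sub>R (Q *v e) - (2 * \<rho>) *\<^sub>R e - (1 / \<tau>1) *\<^sub>R e"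
    using gradx_diff[of Q c A B \<rho> "X (Suc j)" "Y (Suc j)" "X j"]
    unfolding resx_Suc e_def by (simp add: algebra_simps)
  have "norm (sx (Suc j)) \<le> norm (2 *\<^sub>R (Q *v e)) + norm ((2 * \<rho>) *\<^sub>R e) + norm ((1 / \<tau>1) *\<^sub>R e)"
    unfolding sx_eq using norm_triangle_ineq4[of "2 *\<^sub>R (Q *v e) - (2 * \<rho>) *\<^sub>R e" "(1 / \<tau>1) *\<^sub>R e"]
      norm_triangle_ineq4[of "2 *\<^sub>R (Q *v e)" "(2 * \<rho>) *\<^sub>R e"] by linarith
  also have "\<dots> = 2 * norm (Q *v e) + 2 * \<rho> * norm e + 1 / \<tau>1 * norm e"
    using \<rho>_nonneg \<tau>1_pos by simp
  also have "\<dots> \<le> (2 * (normQ + \<rho>) + 1 / \<tau>1) * norm e"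
    using norm_Q_le[of e] by (simp add: algebra_simps)
  also have "\<dots> \<le> 3 / (2 * \<tau>1) * norm e"
    using normQ_\<rho>_le by (intro mult_right_mono) (auto simp: field_simps)
  finally show ?thesis
    by (simp add: dx_Suc e_def)
qed

lemma norm_resy_le: "norm (sy (Suc j)) \<le> dy (Suc j) / \<tau>2 + normK * (dx (Suc j) + dx j)"
proof -
  define v where "v = (X (Suc j) - X j) - (X j - X (j - 1))"
  have "X (Suc j) - Xbar j = v"
    unfolding v_def Xbar_eq by (simp add: algebra_simps scaleR_2)
  then have "sy (Suc j) = (1 / \<tau>2) *\<^sub>R (Y j - Y (Suc j)) - K v"
    using grady_diff[of A b B d "X (Suc j)" "Y (Suc j)" "Xbar j"] unfolding resy_Suc
    by (simp add: algebra_simps)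
  then have "norm (sy (Suc j)) \<le> norm (Y (Suc j) - Y j) / \<tau>2 + normK * norm v"
    using norm_triangle_ineq4[of "(1 / \<tau>2) *\<^sub>R (Y j - Y (Suc j))" "K v"] norm_K_le[of v] \<tau>2_pos
    by (simp add: norm_minus_commute)
  also have "normK * norm v \<le> normK * (dx (Suc j) + dx j)"
    unfolding v_def dx_Suc dx_def[of j] by (intro mult_left_mono norm_triangle_ineq4 normK_nonneg)
  finally show ?thesis
    by (simp add: dy_Suc)
qed

lemma sum_residual_sq_le:
  "(\<Sum>j<N. (norm (sx (Suc j)) + norm (sy (Suc j)))\<^sup>2)
    \<le> ((2 * normK + 3 / (2 * \<tau>1))\<^sup>2 * \<tau>1 + 1 / \<tau>2)
       * (\<Sum>j<N. (dx (Suc j))\<^sup>2 / \<tau>1 + (dy (Suc j))\<^sup>2 / \<tau>2)"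
proof -
  define \<alpha> where "\<alpha> = 3 / (2 * \<tau>1) + normK"
  define C where "C = (\<alpha> + normK)\<^sup>2 * \<tau>1 + 1 / \<tau>2"
  define T where "T j = (\<alpha> * (dx (Suc j))\<^sup>2 + normK * (dx j)\<^sup>2) / ((\<alpha> + normK) * \<tau>1)
                        + (dy (Suc j))\<^sup>2 / \<tau>2" for j
  have "0 < \<alpha>"
    using \<tau>1_pos normK_nonneg by (simp add: \<alpha>_def add_pos_nonneg)
  have term_le: "(norm (sx (Suc j)) + norm (sy (Suc j)))\<^sup>2 \<le> C * T j" for j
    unfolding C_def T_def
  proof (rule weighted_Cauchy_Schwarz_le[OF \<tau>1_pos \<tau>2_pos \<open>0 < \<alpha>\<close> normK_nonneg])
    show "norm (sx (Suc j)) + norm (sy (Suc j)) \<le> \<alpha> * dx (Suc j) + normK * dx j + dy (Suc j) / \<tau>2"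
      using norm_resx_le[of j] norm_resy_le[of j] unfolding \<alpha>_def by (simp add: algebra_simps)
  qed simp
  have T_le: "(\<Sum>j<N. T j) \<le> (\<Sum>j<N. (dx (Suc j))\<^sup>2 / \<tau>1 + (dy (Suc j))\<^sup>2 / \<tau>2)"
  proof -
    have "(\<Sum>j<N. (dx j)\<^sup>2) \<le> (\<Sum>j<N. (dx (Suc j))\<^sup>2)"
      by (rule sum_lessThan_le_sum_Suc) (simp_all add: dx_def)
    then have "(\<Sum>j<N. \<alpha> * (dx (Suc j))\<^sup>2 + normK * (dx j)\<^sup>2)
        \<le> (\<alpha> + normK) * (\<Sum>j<N. (dx (Suc j))\<^sup>2)"
      using normK_nonneg by (simp add: sum.distrib sum_distrib_left[symmetric] distrib_right mult_left_mono)
    then have "(\<Sum>j<N. \<alpha> * (dx (Suc j))\<^sup>2 + normK * (dx j)\<^sup>2) / ((\<alpha> + normK) * \<tau>1)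
        \<le> (\<alpha> + normK) * (\<Sum>j<N. (dx (Suc j))\<^sup>2) / ((\<alpha> + normK) * \<tau>1)"
      using \<open>0 < \<alpha>\<close> normK_nonneg \<tau>1_pos by (intro divide_right_mono) auto
    also have "\<dots> = (\<Sum>j<N. (dx (Suc j))\<^sup>2) / \<tau>1"
      using \<open>0 < \<alpha>\<close> normK_nonneg by simp
    finally show ?thesis
      by (simp add: T_def sum.distrib sum_divide_distrib[symmetric])
  qed
  have "0 \<le> C"
    unfolding C_def using \<tau>1_pos \<tau>2_pos by simp
  have "(\<Sum>j<N. (norm (sx (Suc j)) + norm (sy (Suc j)))\<^sup>2) \<le> C * (\<Sum>j<N. T j)"
    using term_le by (simp add: sum_distrib_left sum_mono)
  also have "\<dots> \<le> C * (\<Sum>j<N. (dx (Suc j))\<^sup>2 / \<tau>1 + (dy (Suc j))\<^sup>2 / \<tau>2)"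
    using T_le \<open>0 \<le> C\<close> by (rule mult_left_mono)
  also have "C = (2 * normK + 3 / (2 * \<tau>1))\<^sup>2 * \<tau>1 + 1 / \<tau>2"
    by (simp add: C_def \<alpha>_def)
  finally show ?thesis .
qed

lemma exists_small_residual:
  assumes Phi_lower: "\<forall>u \<in> box01. \<forall>v \<in> Yset. ereal \<Phi>star \<le> Phi Q c A b B d \<rho> u v"
    and "1 \<le> N"
  shows "\<exists>k0. 1 \<le> k0 \<and> k0 \<le> N
     \<and> sx k0 \<in> (\<lambda>g. grad_x (X k0) (Y k0) + g) ` subdiff (ind box01) (X k0)
     \<and> sy k0 \<in> (\<lambda>g. - grad_y (X k0) (Y k0) + g) ` subdiff (ind Yset) (Y k0)
     \<and> norm (sx k0) + norm (sy k0) \<le>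
        2 * sqrt ((2 * normK + 3 / (2 * \<tau>1))\<^sup>2 * \<tau>1 + 1 / \<tau>2)
          * sqrt ((real_of_ereal (Phi Q c A b B d \<rho> x0 y0) - \<Phi>star) / real N
                  + 2 / (\<tau>1 * real N) * (\<Sum>k = 1..N. (norm (X (k - 1)))\<^sup>2)
                  + 4 * \<tau>2 * (norm r)\<^sup>2)"
proof -
  define C where "C = (2 * normK + 3 / (2 * \<tau>1))\<^sup>2 * \<tau>1 + 1 / \<tau>2"
  define D where "D = (real_of_ereal (Phi Q c A b B d \<rho> x0 y0) - \<Phi>star) / real N
                  + 2 / (\<tau>1 * real N) * (\<Sum>k = 1..N. (norm (X (k - 1)))\<^sup>2)
                  + 4 * \<tau>2 * (norm r)\<^sup>2"
  define S where "S j = norm (sx (Suc j)) + norm (sy (Suc j))" for j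
  have "0 \<le> C"
    unfolding C_def using \<tau>1_pos \<tau>2_pos by simp
  have N_D_eq: "4 * real N * D = 4 * (real_of_ereal (Phi Q c A b B d \<rho> x0 y0) - \<Phi>star)
       + 8 / \<tau>1 * (\<Sum>j<N. (norm (X j))\<^sup>2) + 16 * real N * \<tau>2 * (norm r)\<^sup>2"
    using \<open>1 \<le> N\<close> \<tau>1_pos by (simp add: D_def sum.atLeast1_atMost_eq field_simps)
  have "(\<Sum>j<N. (S j)\<^sup>2) \<le> C * (\<Sum>j<N. (dx (Suc j))\<^sup>2 / \<tau>1 + (dy (Suc j))\<^sup>2 / \<tau>2)"
    unfolding S_def C_def by (rule sum_residual_sq_le)
  then have "(\<Sum>j<N. (S j)\<^sup>2) \<le> C * (4 * real N * D)"
    unfolding N_D_eq using mult_left_mono[OF sum_step_lengths_le[OF Phi_lower, of N] \<open>0 \<le> C\<close>] by linarith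
  then have "(\<Sum>j<N. (S j)\<^sup>2) \<le> real N * (4 * C * D)"
    by (simp add: algebra_simps)
  then obtain j where "j < N" and "(S j)\<^sup>2 \<le> 4 * C * D"
    using exists_le_average[of N "\<lambda>j. (S j)\<^sup>2"] \<open>1 \<le> N\<close> by auto
  then have "S j \<le> 2 * sqrt C * sqrt D"
    using real_sqrt_le_mono[of "(S j)\<^sup>2" "4 * C * D"] by (simp add: S_def real_sqrt_mult)
  then show ?thesis
    using \<open>j < N\<close> resx_in_subdiff[of j] resy_in_subdiff[of j]
    unfolding S_def C_def D_def by (intro exI[of _ "Suc j"]) auto
qed

end

theorem mainTheorem4:
  fixes Q :: "real^'n^'n" and c :: "real^'n" and A :: "real^'n^'m1" and b :: "real^'m1"
    and B :: "real^'n^'m2" and d :: "real^'m2" and \<rho> \<tau>1 \<tau>2 \<Phi>star :: real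
    and x0 :: "real^'n" and y0 :: "(real^'m1) \<times> (real^'m2)"
  defines "K \<equiv> Kop A B"
    and "r \<equiv> (b, d)"
    and "L \<equiv> 2 * (onorm (\<lambda>v. Q *v v) + \<rho>)"
    and "x \<equiv> xit Q c A b B d \<rho> \<tau>1 \<tau>2 x0 y0"
    and "y \<equiv> yit Q c A b B d \<rho> \<tau>1 \<tau>2 x0 y0"
    and "sx \<equiv> resx Q c A b B d \<rho> \<tau>1 \<tau>2 x0 y0"
    and "sy \<equiv> resy Q c A b B d \<rho> \<tau>1 \<tau>2 x0 y0"
  assumes Qsym: "transpose Q = Q"
    and \<rho>: "0 \<le> \<rho>"
    and \<tau>pos: "0 < \<tau>1" "0 < \<tau>2"
    and step1: "\<tau>1 * \<tau>2 * (onorm K)\<^sup>2 \<le> 1 / 2"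
    and step2: "2 * L * \<tau>1 \<le> 1"
    and x0: "x0 \<in> box01"
    and y0: "y0 \<in> Yset"
    and bdd: "\<forall>u \<in> box01. \<forall>v \<in> Yset. ereal \<Phi>star \<le> Phi Q c A b B d \<rho> u v"
  shows "\<forall>N::nat. 1 \<le> N \<longrightarrow> (\<exists>k0. 1 \<le> k0 \<and> k0 \<le> N
     \<and> sx k0 \<in> (\<lambda>g. gradx Q c A B \<rho> (x k0) (y k0) + g) ` subdiff (ind box01) (x k0)
     \<and> sy k0 \<in> (\<lambda>g. - grady A b B d (x k0) (y k0) + g) ` subdiff (ind Yset) (y k0)
     \<and> norm (sx k0) + norm (sy k0) \<le>
        2 * sqrt ((2 * onorm K + 3 / (2 * \<tau>1))\<^sup>2 * \<tau>1 + 1 / \<tau>2)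
          * sqrt ((real_of_ereal (Phi Q c A b B d \<rho> x0 y0) - \<Phi>star) / real N
                  + 2 / (\<tau>1 * real N) * (\<Sum>k = 1..N. (norm (x (k - 1)))\<^sup>2)
                  + 4 * \<tau>2 * (norm r)\<^sup>2))"
proof -
  interpret pdhg_iteration Q c A b B d \<rho> \<tau>1 \<tau>2 x0 y0
    using Qsym \<rho> \<tau>pos step1 step2 x0 y0 unfolding K_def L_def
    by unfold_locales simp_all
  show ?thesis
    unfolding K_def r_def x_def y_def sx_def sy_def
    using exists_small_residual[OF bdd] by blast
qed

end
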